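(* Let $k\ge 0$. (1) There exists a unique $\alpha\in(0,1)$ with $P_k(\alpha)=0$; equivalently, there exists a unique $\alpha'>1$ with $P_k(\alpha')=0$, namely $\alpha'=1/\alpha$. (2) If $\beta\in\mathbb{C}$ is a root of $P_k$, then $\beta=\alpha$, $\beta=\alpha'$, or $|\beta|=1$.
   Context: For $k\ge 0$, $P_{k}(q)=1+\sum_{l=1}^{k+1} q^{4l-4}(q^4-q^3-q^2-q)$, i.e. $P_0=q^4-q^3-q^2-q+1$, $P_1=q^8-q^7-q^6-q^5+q^4-q^3-q^2-q+1$, $P_k=(q^4+1)P_{k-1}-q^4P_{k-2}$. One has $P_k(q)=q^{2k+2}\,q_k(q+q^{-1}+2)$, where $q_0(x)=x^2-5x+3$, $q_1(x)=(x^3-8x^2+17x-5)(x-1)$, $q_k=(x^2-4x+2)q_{k-1}-q_{k-2}$; all roots of $q_k$ are real (it is, up to a factor, the characteristic polynomial of a real symmetric matrix). *)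

theory Defs
  imports Complex_Main
begin

definition P :: "nat \<Rightarrow> 'a::comm_ring_1 \<Rightarrow> 'a" where
  "P k q = 1 + (\<Sum>l = 1..k+1. q ^ (4*l - 4) * (q^4 - q^3 - q^2 - q))"

end

theory Submission
  imports Defs "HOL-Computational_Algebra.Polynomial"
begin

(* P k is a polynomial of degree 4k+4, hence has at most 4k+4 complex
   roots; we exhibit 4k+4 distinct ones, which must therefore be all of them.
   - Algebra: (q^4 - 1) P_k(q) = q^(4k+4) (q^4 - q^3 - q^2 - q) + (q^3 + q^2 + q - 1),
     and P_k is palindromic: z^(4k+4) P_k(1/z) = P_k(z).
   - Unit circle: the identity gives P_k(e^(it)) sin 2t = e^(i(2k+2)t) g_k(t) for a real
     trigonometric sum g_k.  At the nodes (2j+1) pi/(4k+5), j = 0..2k+1, and at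
     (4k+4) pi/(4k+5), the signs of g_k alternate; the intermediate value theorem gives
     2k+1 zeros of g_k in (0, pi) away from pi/2 (the one sign change around pi/2, where
     sin 2t vanishes, is discarded).  Each zero t yields the two non-real roots e^(+-it).
   - Real line: P_k(0) = 1 > 0 > P_k(1) gives a root alpha in (0,1), and palindromy
     gives the root 1/alpha > 1.
   Counting then shows that the roots are exactly alpha, 1/alpha and 4k+2 non-real points
   of the unit circle, from which every part of the theorem follows. *)

section \<open>Algebraic properties of P\<close>

lemma P_0: "P 0 q = q^4 - q^3 - q^2 - q + 1"
  unfolding P_def by simp

lemma P_Suc: "P (Suc k) q = P k q + q^(4*k+4) * (q^4 - q^3 - q^2 - q)"
  unfolding P_def by (simp add: algebra_simps)

(* Summing the geometric series that defines P k. *)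
lemma P_closed_form:
  "(q^4 - 1) * P k q = q^(4*k+4) * (q^4 - q^3 - q^2 - q) + (q^3 + q^2 + q - 1)"
proof (induction k)
  case 0
  show ?case by (simp add: P_0 algebra_simps power_add[symmetric] eval_nat_numeral)
next
  case (Suc k)
  have "(q^4 - 1) * P (Suc k) q
      = (q^4 - 1) * P k q + (q^4 - 1) * q^(4*k+4) * (q^4 - q^3 - q^2 - q)"
    by (simp add: P_Suc algebra_simps)
  also have "\<dots> = q^(4*Suc k+4) * (q^4 - q^3 - q^2 - q) + (q^3 + q^2 + q - 1)"
    using Suc by (simp add: algebra_simps power_add)
  finally show ?case .
qed

lemma P_palindromic:
  fixes z :: "'a::field"
  assumes "z \<noteq> 0"
  shows "z^(4*k+4) * P k (1/z) = P k z"
proof (induction k)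
  case 0
  show ?case using assms by (simp add: P_0 field_simps eval_nat_numeral)
next
  case (Suc k)
  have pow: "z^(4*Suc k+4) = z^4 * z^(4*k+4)"
    by (simp add: power_add[symmetric])
  have cancel: "z^(4*k+4) * (1/z)^(4*k+4) = 1"
    using assms by (simp add: power_mult_distrib[symmetric])
  have tail: "z^4 * ((1/z)^4 - (1/z)^3 - (1/z)^2 - 1/z) = 1 - z - z^2 - z^3"
    using assms by (simp add: field_simps eval_nat_numeral)
  have "z^(4*Suc k+4) * P (Suc k) (1/z)
      = z^4 * (z^(4*k+4) * P k (1/z))
        + z^4 * ((z^(4*k+4) * (1/z)^(4*k+4)) * ((1/z)^4 - (1/z)^3 - (1/z)^2 - 1/z))"
    unfolding pow P_Suc by (simp add: algebra_simps)
  also have "\<dots> = z^4 * (z^(4*k+4) * P k (1/z)) + (1 - z - z^2 - z^3)"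
    unfolding cancel mult_1_left tail ..
  also have "\<dots> = P (Suc k) z"
    using Suc P_closed_form[of z k] by (simp add: P_Suc algebra_simps)
  finally show ?case .
qed

lemma P_of_real: "P k (of_real x) = of_real (P k x)"
  unfolding P_def by simp

section \<open>P as a polynomial of degree 4k+4\<close>

fun P_poly :: "nat \<Rightarrow> 'a::comm_ring_1 poly" where
  "P_poly 0 = [:1, -1, -1, -1, 1:]"
| "P_poly (Suc k) = P_poly k + monom 1 (4*k+4) * [:0, -1, -1, -1, 1:]"

lemma poly_P_poly: "poly (P_poly k) q = P k q"
  by (induction k) (simp_all add: P_0 P_Suc poly_monom algebra_simps eval_nat_numeral)

lemma P_poly_degree:
  "degree (P_poly k :: 'a::comm_ring_1 poly) \<le> 4*k+4 \<and> coeff (P_poly k :: 'a poly) (4*k+4) = 1"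
proof (induction k)
  case 0
  show ?case by (simp add: numeral_eq_Suc)
next
  case (Suc k)
  have step: "degree (monom (1::'a) (4*k+4) * [:0, -1, -1, -1, 1:]) \<le> 4*k+8"
    by (rule order.trans[OF degree_mult_le]) (use degree_monom_le[of "1::'a" "4*k+4"] in simp)
  have "degree (P_poly (Suc k) :: 'a poly) \<le> 4 * Suc k + 4"
    unfolding P_poly.simps(2) using Suc step by (intro order.trans[OF degree_add_le]) auto
  moreover have "coeff (P_poly (Suc k) :: 'a poly) (4 * Suc k + 4) = 1"
    using Suc by (simp add: coeff_monom_mult coeff_eq_0 numeral_eq_Suc)
  ultimately show ?case by blast
qed

lemma roots_eq_if_enough:
  fixes p :: "'a::idom poly"
  assumes "p \<noteq> 0" and "A \<subseteq> {z. poly p z = 0}" and "degree p \<le> card A"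
  shows "{z. poly p z = 0} = A"
  using card_seteq[OF poly_roots_finite[OF assms(1)] assms(2)]
    card_poly_roots_bound[OF assms(1)] assms(3) by simp

lemma P_roots_eq:
  assumes "A \<subseteq> {z::complex. P k z = 0}" and "card A = 4*k+4"
  shows "{z::complex. P k z = 0} = A"
proof -
  have "coeff (P_poly k :: complex poly) (4*k+4) = 1" and deg: "degree (P_poly k :: complex poly) \<le> 4*k+4"
    using P_poly_degree by blast+
  then have "P_poly k \<noteq> (0 :: complex poly)" by auto
  from roots_eq_if_enough[OF this] show ?thesis
    using assms deg by (simp add: poly_P_poly)
qed

section \<open>Roots on the unit circle\<close>

(* The real trigonometric sum with P_k(e^(it)) sin 2t = e^(i(2k+2)t) g_k(t). *)
definition g :: "nat \<Rightarrow> real \<Rightarrow> real" where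
  "g k t = sin ((2*real k+4)*t) - sin ((2*real k+3)*t) - sin ((2*real k+2)*t) - sin ((2*real k+1)*t)"

lemma two_i_sin: "2 * \<i> * complex_of_real (sin a) = cis a - cis (-a)"
  by (simp add: complex_eq_iff)

lemma P_cis:
  "P k (cis t) * complex_of_real (sin (2*t)) = cis ((2*real k+2)*t) * complex_of_real (g k t)"
proof -
  let ?z = "cis t"
  have lhs: "?z^4 - 1 = cis (2*t) * (2*\<i>*sin (2*t))"
    unfolding two_i_sin DeMoivre by (simp add: right_diff_distrib cis_mult)
  have g_cis: "2*\<i>*complex_of_real (g k t) = (cis ((2*real k+4)*t) - cis (-((2*real k+4)*t)))
       - (cis ((2*real k+3)*t) - cis (-((2*real k+3)*t)))
       - (cis ((2*real k+2)*t) - cis (-((2*real k+2)*t)))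
       - (cis ((2*real k+1)*t) - cis (-((2*real k+1)*t)))"
    unfolding g_def two_i_sin[symmetric] by (simp add: algebra_simps)
  have rhs: "?z^(4*k+4) * (?z^4 - ?z^3 - ?z^2 - ?z) + (?z^3 + ?z^2 + ?z - 1)
      = cis ((2*real k+4)*t) * (2*\<i>*g k t)"
    unfolding DeMoivre g_cis by (simp add: ring_distribs cis_mult, simp add: algebra_simps)
  have "cis (2*t) * (2*\<i>) * (P k ?z * sin (2*t)) = (?z^4 - 1) * P k ?z"
    unfolding lhs by simp
  also have "\<dots> = cis ((2*real k+4)*t) * (2*\<i>*g k t)"
    unfolding P_closed_form by (rule rhs)
  also have "\<dots> = cis (2*t) * (2*\<i>) * (cis ((2*real k+2)*t) * g k t)"
    by (simp add: cis_mult algebra_simps)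
  finally show ?thesis by simp
qed

lemma P_cis_root: "g k t = 0 \<Longrightarrow> sin (2*t) \<noteq> 0 \<Longrightarrow> P k (cis t) = 0"
  using P_cis[of k t] by simp

lemma g_minus: "g k (-t) = - g k t"
  unfolding g_def by simp

lemma g_continuous: "continuous_on S (g k)"
  unfolding g_def by (intro continuous_intros)

(* Product form, which makes the sign of g_k at the nodes visible. *)
lemma g_product_form:
  "g k t = 2 * (cos ((4*real k+5)*t/2) * sin (3*t/2) - sin ((4*real k+5)*t/2) * cos (t/2))"
proof -
  define a where "a = (4*real k+5)*t/2"
  define b where "b = t/2"
  have args: "(2*real k+4)*t = a + 3*b" "(2*real k+3)*t = a + b" "(2*real k+2)*t = a - b"
    "(2*real k+1)*t = a - 3*b" "3*t/2 = 3*b"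
    unfolding a_def b_def by (simp_all add: field_simps)
  show ?thesis unfolding g_def args a_def[symmetric] b_def[symmetric]
    by (simp add: sin_add sin_diff algebra_simps)
qed

definition node :: "nat \<Rightarrow> nat \<Rightarrow> real" where
  "node k j = (if j \<le> 2*k+1 then (2*real j+1)*pi/(4*real k+5) else (4*real k+4)*pi/(4*real k+5))"

lemma node_strict_mono: "i < j \<Longrightarrow> j \<le> 2*k+2 \<Longrightarrow> node k i < node k j"
  unfolding node_def by (auto intro!: divide_strict_right_mono)

lemma node_pos: "0 < node k 0"
  unfolding node_def by simp

lemma node_lt_pi: "node k (2*k+2) < pi"
  unfolding node_def by (simp add: pos_divide_less_eq)

lemma node_middle: "node k k < pi/2" "pi/2 < node k (Suc k)"
  unfolding node_def by (simp_all add: field_simps)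

lemma g_node_sign:
  assumes "j \<le> 2*k+2"
  shows "(-1)^j * g k (node k j) < 0"
proof (cases "j \<le> 2*k+1")
  case True
  let ?t = "node k j"
  have arg: "(4*real k+5) * ?t/2 = real j * pi + pi/2"
    using True unfolding node_def by (simp add: field_simps)
  have "?t < pi"
    using node_strict_mono[of j "2*k+2" k] node_lt_pi[of k] True by linarith
  moreover have "0 < ?t"
    using node_pos[of k] node_strict_mono[of 0 j k] True by (cases "j = 0") auto
  ultimately have "0 < cos (?t/2)"
    by (intro cos_gt_zero) auto
  moreover have "g k ?t = -2 * (-1)^j * cos (?t/2)"
    unfolding g_product_form arg by (simp add: sin_add cos_add)
  ultimately show ?thesis
    by (simp add: mult.assoc[symmetric] power_mult_distrib[symmetric])
next
  case False
  then have j: "j = 2*k+2" using assms by simp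
  let ?t = "node k j"
  have arg: "(4*real k+5) * ?t/2 = real (2*k+2) * pi"
    unfolding j node_def by (simp add: field_simps)
  have "sin (3*?t/2) < 0"
    unfolding j node_def by (rule sin_lt_zero) (simp_all add: field_simps add_pos_nonneg)
  moreover have "cos (real (2*k+2) * pi) = 1" "sin (real (2*k+2) * pi) = 0"
    by (simp only: cos_npi, simp) (rule sin_npi)
  moreover have "(-1::real)^j = 1"
    unfolding j by simp
  ultimately show ?thesis
    unfolding g_product_form arg by simp
qed

lemma IVT_strict:
  fixes f :: "real \<Rightarrow> real"
  assumes "continuous_on {a..b} f" and "a < b" and "f a * f b < 0"
  shows "\<exists>r. a < r \<and> r < b \<and> f r = 0"
proof -
  have "\<exists>r. a \<le> r \<and> r \<le> b \<and> f r = 0"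
  proof (cases "f a < 0")
    case True
    then show ?thesis using assms by (intro IVT') (auto simp: mult_less_0_iff)
  next
    case False
    then show ?thesis using assms by (intro IVT2') (auto simp: mult_less_0_iff)
  qed
  then obtain r where "a \<le> r" "r \<le> b" "f r = 0" by blast
  moreover have "r \<noteq> a" "r \<noteq> b" using assms(3) \<open>f r = 0\<close> by auto
  ultimately show ?thesis by (intro exI[of _ r]) auto
qed

lemma zeros_from_sign_changes:
  fixes f :: "real \<Rightarrow> real" and x :: "nat \<Rightarrow> real"
  assumes cont: "continuous_on UNIV f"
    and mono: "\<And>i j. i < j \<Longrightarrow> j \<le> n \<Longrightarrow> x i < x j"
    and J: "J \<subseteq> {..<n}"
    and sign: "\<And>j. j \<in> J \<Longrightarrow> f (x j) * f (x (Suc j)) < 0"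
  shows "\<exists>T. finite T \<and> card T = card J \<and>
           (\<forall>t\<in>T. f t = 0 \<and> (\<exists>j\<in>J. x j < t \<and> t < x (Suc j)))"
proof -
  have "\<forall>j\<in>J. \<exists>r. x j < r \<and> r < x (Suc j) \<and> f r = 0"
    using J by (auto intro!: IVT_strict continuous_on_subset[OF cont] mono sign)
  then obtain r where r: "\<And>j. j \<in> J \<Longrightarrow> x j < r j \<and> r j < x (Suc j) \<and> f (r j) = 0"
    by metis
  have r_mono: "r i < r j" if "i \<in> J" "j \<in> J" "i < j" for i j
  proof -
    have "x (Suc i) \<le> x j"
      using that J mono[of "Suc i" j] by (cases "Suc i = j") auto
    then show ?thesis using r[OF that(1)] r[OF that(2)] by linarith
  qed
  have "inj_on r J"
    by (rule inj_onI, metis r_mono linorder_neq_iff less_irrefl)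
  moreover have "finite J" using J finite_subset by blast
  ultimately show ?thesis
    using r by (intro exI[of _ "r ` J"]) (auto simp: card_image)
qed

lemma g_zeros:
  "\<exists>T. finite T \<and> card T = 2*k+1 \<and> T \<subseteq> {0<..<pi} - {pi/2} \<and> (\<forall>t\<in>T. g k t = 0)"
proof -
  define J where "J = {..<2*k+2} - {k}"
  have sign: "g k (node k j) * g k (node k (Suc j)) < 0" if "j \<in> J" for j
  proof -
    have pos: "((-1)^j * g k (node k j)) * ((-1)^Suc j * g k (node k (Suc j))) > 0"
      using that g_node_sign[of j k] g_node_sign[of "Suc j" k]
      unfolding J_def by (intro mult_neg_neg) auto
    have eq: "((-1)^j * g k (node k j)) * ((-1)^Suc j * g k (node k (Suc j)))
        = - ((-1)^j * (-1)^j * (g k (node k j) * g k (node k (Suc j))))"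
      by (simp add: algebra_simps)
    have "(-1::real)^j * (-1)^j = 1"
      by (simp flip: power_mult_distrib)
    then show ?thesis
      using pos unfolding eq by simp
  qed
  have J_sub: "J \<subseteq> {..<2*k+2}"
    unfolding J_def by auto
  have "\<exists>T. finite T \<and> card T = card J \<and>
      (\<forall>t\<in>T. g k t = 0 \<and> (\<exists>j\<in>J. node k j < t \<and> t < node k (Suc j)))"
    using node_strict_mono J_sub sign by (rule zeros_from_sign_changes[OF g_continuous])
  then obtain T where T: "finite T" "card T = card J"
      and zero_between: "\<forall>t\<in>T. g k t = 0 \<and> (\<exists>j\<in>J. node k j < t \<and> t < node k (Suc j))"
    by blast
  have "t \<in> {0<..<pi} - {pi/2}" if t: "t \<in> T" for t
  proof -
    obtain j where j: "j \<in> J" "node k j < t" "t < node k (Suc j)"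
      using zero_between t by blast
    have j_range: "j < 2*k+2" "j \<noteq> k"
      using j(1) unfolding J_def by auto
    have "node k 0 \<le> node k j"
      using node_strict_mono[of 0 j k] j_range by (cases "j = 0") auto
    then have "0 < t"
      using node_pos[of k] j(2) by linarith
    moreover have "node k (Suc j) \<le> node k (2*k+2)"
      using node_strict_mono[of "Suc j" "2*k+2" k] j_range by (cases "Suc j = 2*k+2") auto
    then have "t < pi"
      using node_lt_pi[of k] j(3) by linarith
    moreover have "t \<noteq> pi/2"
    proof (cases "j < k")
      case True
      then have "node k (Suc j) \<le> node k k"
        using node_strict_mono[of "Suc j" k k] by (cases "Suc j = k") auto
      then show ?thesis using node_middle(1)[of k] j by linarith
    next
      case False
      then have "node k (Suc k) \<le> node k j"
        using j_range node_strict_mono[of "Suc k" j k] by (cases "Suc k = j") auto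
      then show ?thesis using node_middle(2)[of k] j by linarith
    qed
    ultimately show ?thesis by simp
  qed
  then have "T \<subseteq> {0<..<pi} - {pi/2}"
    by blast
  moreover have "card J = 2*k+1"
    unfolding J_def by (simp add: card_Diff_singleton)
  ultimately show ?thesis
    using T zero_between by (intro exI[of _ T]) simp
qed

lemma inj_on_cis: "inj_on cis {-pi<..pi}"
  by (rule inj_on_inverseI[of _ Arg]) (auto intro: cis_Arg_unique)

lemma sin_double_nonzero: "0 < t \<Longrightarrow> t < pi \<Longrightarrow> t \<noteq> pi/2 \<Longrightarrow> sin (2*t) \<noteq> 0"
  using sin_gt_zero[of "2*t"] sin_lt_zero[of "2*t"] by (cases "t < pi/2") auto

lemma unit_circle_roots:
  "\<exists>U::complex set. U \<subseteq> {z. P k z = 0} \<and> card U = 4*k+2 \<and> (\<forall>z\<in>U. cmod z = 1 \<and> Im z \<noteq> 0)"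
proof -
  obtain T where T: "finite T" "card T = 2*k+1" "T \<subseteq> {0<..<pi} - {pi/2}"
      and zero: "\<And>t. t \<in> T \<Longrightarrow> g k t = 0"
    using g_zeros[of k] by blast
  define S where "S = T \<union> uminus ` T"
  have S_range: "S \<subseteq> {-pi<..<pi} - {0}"
    using T(3) unfolding S_def by auto
  have "0 < t" if "t \<in> T" for t
    using T(3) that by auto
  then have "T \<inter> uminus ` T = {}"
    by (auto, metis neg_0_less_iff_less not_less_iff_gr_or_eq)
  then have "card S = card T + card (uminus ` T)"
    unfolding S_def using T(1) by (intro card_Un_disjoint) auto
  then have card_S: "card S = 4*k+2"
    using T(2) by (simp add: card_image)
  have "P k (cis t) = 0" if "t \<in> S" for t
  proof -
    have "sin (2*t) \<noteq> 0" if "t \<in> T" for t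
      using that T(3) by (intro sin_double_nonzero) auto
    then show ?thesis
      using that zero unfolding S_def by (auto intro!: P_cis_root simp: g_minus)
  qed
  moreover have "Im (cis t) \<noteq> 0" if "t \<in> S" for t
    using S_range that sin_zero_pi_iff[of t] by (auto simp: abs_less_iff)
  moreover have "S \<subseteq> {-pi<..pi}"
    using S_range by auto
  then have "card (cis ` S) = 4*k+2"
    using card_S card_image[OF inj_on_subset[OF inj_on_cis]] by simp
  ultimately show ?thesis by (intro exI[of _ "cis ` S"]) auto
qed

section \<open>The real roots and the main theorem\<close>

lemma real_root_in_unit_interval: "\<exists>\<alpha>::real. 0 < \<alpha> \<and> \<alpha> < 1 \<and> P k \<alpha> = 0"
proof -
  have at0: "P k (0::real) = 1" and at1: "P k (1::real) < 0"
    unfolding P_def by simp_all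
  have "continuous_on {0..1} (P k :: real \<Rightarrow> real)"
    unfolding P_def by (intro continuous_intros)
  then have "\<exists>\<alpha>. 0 \<le> \<alpha> \<and> \<alpha> \<le> 1 \<and> P k \<alpha> = (0::real)"
    using at0 at1 by (intro IVT2') auto
  then obtain \<alpha> :: real where "0 \<le> \<alpha>" "\<alpha> \<le> 1" "P k \<alpha> = 0"
    by blast
  moreover have "\<alpha> \<noteq> 0" "\<alpha> \<noteq> 1" using at0 at1 \<open>P k \<alpha> = 0\<close> by auto
  ultimately show ?thesis by (intro exI[of _ \<alpha>]) auto
qed

lemma P_root_classification:
  "\<exists>\<alpha>::real. 0 < \<alpha> \<and> \<alpha> < 1 \<and> P k \<alpha> = 0 \<and> P k (1/\<alpha>) = 0 \<and>
     (\<forall>\<beta>::complex. P k \<beta> = 0 \<longrightarrow>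
        \<beta> = of_real \<alpha> \<or> \<beta> = of_real (1/\<alpha>) \<or> (cmod \<beta> = 1 \<and> Im \<beta> \<noteq> 0))"
proof -
  obtain U where U: "U \<subseteq> {z::complex. P k z = 0}" "card U = 4*k+2"
      and unit: "\<And>z. z \<in> U \<Longrightarrow> cmod z = 1 \<and> Im z \<noteq> 0"
    using unit_circle_roots[of k] by blast
  obtain \<alpha> :: real where \<alpha>: "0 < \<alpha>" "\<alpha> < 1" "P k \<alpha> = 0"
    using real_root_in_unit_interval by blast
  have inv: "P k (1/\<alpha>) = 0"
    using P_palindromic[of \<alpha> k] \<alpha> by simp
  define A where "A = insert (complex_of_real \<alpha>) (insert (complex_of_real (1/\<alpha>)) U)"
  have "P k (complex_of_real \<alpha>) = 0" "P k (complex_of_real (1/\<alpha>)) = 0"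
    by (simp_all only: P_of_real \<alpha>(3) inv of_real_0)
  then have "A \<subseteq> {z. P k z = 0}"
    using U(1) unfolding A_def by blast
  moreover have "card A = 4*k+4"
  proof -
    have "finite U" using U(2) by (intro card_ge_0_finite) simp
    moreover have "complex_of_real x \<notin> U" for x using unit by force
    moreover have "\<alpha> * \<alpha> < 1 * 1" using \<alpha> by (intro mult_strict_mono) auto
    then have "\<alpha> \<noteq> 1/\<alpha>" using \<alpha> by (auto simp: field_simps)
    then have "complex_of_real \<alpha> \<noteq> complex_of_real (1/\<alpha>)"
      by (metis of_real_eq_iff)
    ultimately show ?thesis unfolding A_def using U(2) by (simp del: of_real_divide)
  qed
  ultimately have "{z. P k z = 0} = A" by (rule P_roots_eq)
  then show ?thesis
    using \<alpha> inv unit unfolding A_def by (intro exI[of _ \<alpha>]) auto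
qed

theorem mainTheorem4:
  fixes k :: nat
  shows "\<exists>\<alpha>::real. 0 < \<alpha> \<and> \<alpha> < 1 \<and> P k \<alpha> = 0
     \<and> (\<forall>a::real. 0 < a \<and> a < 1 \<and> P k a = 0 \<longrightarrow> a = \<alpha>)
     \<and> (\<exists>!a'::real. 1 < a' \<and> P k a' = 0)
     \<and> 1 < 1 / \<alpha> \<and> P k (1 / \<alpha>) = 0
     \<and> (\<forall>\<beta>::complex. P k \<beta> = 0 \<longrightarrow>
          \<beta> = complex_of_real \<alpha> \<or> \<beta> = complex_of_real (1 / \<alpha>) \<or> cmod \<beta> = 1)"
proof -
  obtain \<alpha> :: real where \<alpha>: "0 < \<alpha>" "\<alpha> < 1" "P k \<alpha> = 0" "P k (1/\<alpha>) = 0"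
    and roots: "\<And>\<beta>::complex. P k \<beta> = 0 \<Longrightarrow>
        \<beta> = of_real \<alpha> \<or> \<beta> = of_real (1/\<alpha>) \<or> (cmod \<beta> = 1 \<and> Im \<beta> \<noteq> 0)"
    using P_root_classification[of k] by blast
  have inv_gt: "1 < 1/\<alpha>" using \<alpha> by simp
  (* The remaining roots are non-real, so every real root is alpha or 1/alpha. *)
  have real_roots: "a = \<alpha> \<or> a = 1/\<alpha>" if "P k a = 0" for a :: real
  proof -
    have "P k (complex_of_real a) = 0"
      using that by (simp only: P_of_real of_real_0)
    from roots[OF this] show ?thesis
      by (metis Im_complex_of_real of_real_eq_iff)
  qed
  show ?thesis
  proof (intro exI[of _ \<alpha>] conjI allI impI ex1I[of _ "1/\<alpha>"])
    show "a = \<alpha>" if "0 < a \<and> a < 1 \<and> P k a = 0" for a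
      using that real_roots[of a] inv_gt by auto
    show "a' = 1/\<alpha>" if "1 < a' \<and> P k a' = 0" for a'
      using that real_roots[of a'] \<alpha> by auto
  qed (use \<alpha> inv_gt roots in auto)
qed

end
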